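(* A semiring $R$ has a zero if and only if the identity relation $\mathrm{id}_R=\{(x,x)\mid x\in R\}$ is a $k$-congruence on $R$. In this case, if $0$ is the zero of $R$, then $\kappa_{\{0\}}=\mathrm{id}_R$.
   Context: A semiring $(R,+,\cdot)$ is a set with two binary operations such that $(R,+)$ is a commutative semigroup, $(R,\cdot)$ is a semigroup, and multiplication distributes over addition from both sides; no additive neutral element or identity is assumed. An element $0\in R$ is a zero of $R$ if $0+r=r$ and $0r=r0=0$ for all $r\in R$. An ideal of $R$ is a nonempty subset $A\subseteq R$ with $a+b\in A$ and $ra,ar\in A$ for all $a,b\in A$, $r\in R$. A congruence on $R$ is an equivalence relation $\equiv$ such that $a\equiv b$ implies $a+c\equiv b+c$, $ac\equiv bc$, $ca\equiv cb$ for all $a,b,c\in R$. For an ideal $A$, $\kappa_A$ is the congruence defined by $x\,\kappa_A\,y$ iff $x+a=y+b$ for some $a,b\in A$. A congruence $\theta$ is a $k$-congruence if $\theta=\kappa_A$ for some ideal $A$ of $R$. Throughout, $|R|\geq 2$. *)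

theory Defs
  imports Main
begin

text \<open>Semirings are modelled by the type class semiring of HOL: a commutative
additive semigroup, a multiplicative semigroup, two-sided distributivity;
no zero or one is assumed.\<close>

definition is_zero :: "'a::semiring \<Rightarrow> bool" where
  "is_zero z \<longleftrightarrow> (\<forall>r. z + r = r \<and> z * r = z \<and> r * z = z)"

definition sr_ideal :: "'a::semiring set \<Rightarrow> bool" where
  "sr_ideal A \<longleftrightarrow> A \<noteq> {} \<and> (\<forall>a\<in>A. \<forall>b\<in>A. a + b \<in> A)
     \<and> (\<forall>a\<in>A. \<forall>r. r * a \<in> A \<and> a * r \<in> A)"

definition sr_congruence :: "'a::semiring rel \<Rightarrow> bool" where
  "sr_congruence \<theta> \<longleftrightarrow> equiv UNIV \<theta> \<and>
     (\<forall>a b c. (a, b) \<in> \<theta> \<longrightarrow> (a + c, b + c) \<in> \<theta> \<and> (a * c, b * c) \<in> \<theta> \<and> (c * a, c * b) \<in> \<theta>)"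

definition kappa :: "'a::semiring set \<Rightarrow> 'a rel" where
  "kappa A = {(x, y). \<exists>a\<in>A. \<exists>b\<in>A. x + a = y + b}"

definition k_congruence :: "'a::semiring rel \<Rightarrow> bool" where
  "k_congruence \<theta> \<longleftrightarrow> sr_congruence \<theta> \<and> (\<exists>A. sr_ideal A \<and> \<theta> = kappa A)"

end

theory Submission
  imports Defs
begin

text \<open>If \<open>id\<^sub>R = \<kappa>\<^sub>A\<close> for an ideal \<open>A\<close>, then \<open>x + a = x + b\<close> forces \<open>a = b\<close>
  for \<open>a, b \<in> A\<close>, so \<open>A = {z}\<close>; closure of \<open>A\<close> gives \<open>z + z = z\<close>, \<open>zr = rz = z\<close>,
  and \<open>(z + r) + z = r + z\<close> then yields \<open>z + r = r\<close>.\<close>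

lemma kappa_singleton_zero:
  assumes "is_zero (z::'a::semiring)"
  shows "kappa {z} = Id"
  using assms unfolding kappa_def is_zero_def by (auto simp: add.commute)

lemma sr_ideal_singleton_zero:
  assumes "is_zero (z::'a::semiring)"
  shows "sr_ideal {z}"
  using assms unfolding sr_ideal_def is_zero_def by auto

lemma sr_congruence_Id: "sr_congruence (Id :: 'a::semiring rel)"
  unfolding sr_congruence_def by (auto simp: equiv_def refl_on_def sym_def trans_def)

lemma kappa_eq_Id_cancel:
  assumes "kappa A = Id" "a \<in> A" "b \<in> A" "x + a = y + b"
  shows "x = y"
proof -
  have "(x, y) \<in> kappa A" using assms(2-4) unfolding kappa_def by blast
  with assms(1) show ?thesis by simp
qed

lemma kappa_eq_Id_singleton:
  assumes "kappa A = Id" "a \<in> A" "b \<in> A"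
  shows "a = b"
  using kappa_eq_Id_cancel[OF assms(1) assms(3) assms(2), of a b]
  by (simp add: add.commute)

lemma is_zero_if_kappa_eq_Id:
  assumes ideal: "sr_ideal A" and kappa: "kappa A = Id" and "z \<in> A"
  shows "is_zero z"
  unfolding is_zero_def
proof
  fix r
  have closed: "z + z \<in> A" "z * r \<in> A" "r * z \<in> A"
    using ideal \<open>z \<in> A\<close> unfolding sr_ideal_def by blast+
  then have "z + z = z" "z * r = z" "r * z = z"
    using kappa_eq_Id_singleton[OF kappa _ \<open>z \<in> A\<close>] by blast+
  moreover have "(z + r) + z = r + z"
    by (metis \<open>z + z = z\<close> add.assoc add.commute)
  then have "z + r = r"
    using kappa_eq_Id_cancel[OF kappa \<open>z \<in> A\<close> \<open>z \<in> A\<close>] by blast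
  ultimately show "z + r = r \<and> z * r = z \<and> r * z = z" by simp
qed

lemma has_zero_iff_k_congruence_Id:
  "(\<exists>z::'a::semiring. is_zero z) \<longleftrightarrow> k_congruence (Id :: 'a rel)"
proof
  assume "\<exists>z::'a. is_zero z"
  then obtain z :: 'a where "is_zero z" ..
  then have "sr_ideal {z}" "Id = kappa {z}"
    by (simp_all add: sr_ideal_singleton_zero kappa_singleton_zero)
  then show "k_congruence (Id :: 'a rel)"
    unfolding k_congruence_def using sr_congruence_Id by blast
next
  assume "k_congruence (Id :: 'a rel)"
  then obtain A :: "'a set" where A: "sr_ideal A" "kappa A = Id"
    unfolding k_congruence_def by auto
  then obtain z where "z \<in> A" unfolding sr_ideal_def by auto
  with A show "\<exists>z::'a. is_zero z" using is_zero_if_kappa_eq_Id by blast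
qed

theorem theorem4p2:
  assumes "\<exists>x y :: 'a::semiring. x \<noteq> y"
  shows "((\<exists>z::'a. is_zero z) \<longleftrightarrow> k_congruence (Id :: 'a rel))
         \<and> (\<forall>z::'a. is_zero z \<longrightarrow> kappa {z} = Id)"
  using has_zero_iff_k_congruence_Id kappa_singleton_zero by blast

end
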